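(* Let $G$ be a finitely generated group acting on a set $X$. Then the following are equivalent: (1) the action $G\curvearrowright X$ is amenable; (2) for every configuration pair $(\mathfrak{g},\mathcal{E})$ for this action, the system of configuration equations $\mathrm{Eq}(\mathfrak{g},\mathcal{E};X)$ has a normalized solution.
   Context: An action $G\curvearrowright X$ is amenable if there is a finitely additive measure $\mu$ on all subsets of $X$ with values in $[0,\infty]$, with $\mu(gE)=\mu(E)$ for all $E\subseteq X$, $g\in G$, and $\mu(X)=1$. A configuration pair $(\mathfrak{g},\mathcal{E})$ consists of an ordered tuple $\mathfrak{g}=(g_1,\dots,g_n)$ of elements of $G$ and a finite partition $\mathcal{E}=\{E_1,\dots,E_m\}$ of $X$. A configuration related to $(\mathfrak{g},\mathcal{E})$ is a tuple $C=(C_0,C_1,\dots,C_n)\in\{1,\dots,m\}^{n+1}$ for which there exists $x\in E_{C_0}$ with $g_i\cdot x\in E_{C_i}$ for all $i=1,\dots,n$; the set of these is $\mathrm{Con}(\mathfrak{g},\mathcal{E};X)$. The configuration equations $\mathrm{Eq}(\mathfrak{g},\mathcal{E};X)$ are the linear equations in unknowns $(f_C)_{C\in \mathrm{Con}(\mathfrak{g},\mathcal{E};X)}$: for every $j\in\{1,\dots,n\}$ and $i\in\{1,\dots,m\}$, $\sum\{f_C: C_j=i\}=\sum\{f_C: C_0=i\}$. A normalized solution is a solution with all $f_C\ge 0$ and $\sum_C f_C=1$. *)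

theory Defs
  imports "HOL-Algebra.Group_Action" "HOL-Algebra.Generated_Groups" "HOL-Library.Extended_Nonnegative_Real"
begin

definition finitely_generated_group :: "('g, 'b) monoid_scheme \<Rightarrow> bool" where
  "finitely_generated_group G \<longleftrightarrow>
     (\<exists>S. finite S \<and> S \<subseteq> carrier G \<and> generate G S = carrier G)"

definition amenable_action ::
  "('g, 'b) monoid_scheme \<Rightarrow> 'x set \<Rightarrow> ('g \<Rightarrow> 'x \<Rightarrow> 'x) \<Rightarrow> bool" where
  "amenable_action G X \<phi> \<longleftrightarrow>
     (\<exists>\<mu> :: 'x set \<Rightarrow> ennreal.
        \<mu> {} = 0 \<and>
        (\<forall>A B. A \<subseteq> X \<longrightarrow> B \<subseteq> X \<longrightarrow> A \<inter> B = {} \<longrightarrow> \<mu> (A \<union> B) = \<mu> A + \<mu> B) \<and>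
        (\<forall>E g. E \<subseteq> X \<longrightarrow> g \<in> carrier G \<longrightarrow> \<mu> (\<phi> g ` E) = \<mu> E) \<and>
        \<mu> X = 1)"

definition indexed_partition :: "'x set \<Rightarrow> 'x set list \<Rightarrow> bool" where
  "indexed_partition X Es \<longleftrightarrow>
     (\<forall>i<length Es. Es ! i \<noteq> {} \<and> Es ! i \<subseteq> X) \<and>
     (\<forall>i<length Es. \<forall>j<length Es. i \<noteq> j \<longrightarrow> Es ! i \<inter> Es ! j = {}) \<and>
     (\<Union>i<length Es. Es ! i) = X"

definition configuration_pair ::
  "('g, 'b) monoid_scheme \<Rightarrow> 'x set \<Rightarrow> 'g list \<Rightarrow> 'x set list \<Rightarrow> bool" where
  "configuration_pair G X gs Es \<longleftrightarrow> set gs \<subseteq> carrier G \<and> indexed_partition X Es"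

definition Con ::
  "('g \<Rightarrow> 'x \<Rightarrow> 'x) \<Rightarrow> 'g list \<Rightarrow> 'x set list \<Rightarrow> 'x set \<Rightarrow> nat list set" where
  "Con \<phi> gs Es X =
     {C. length C = Suc (length gs) \<and> (\<forall>k<length C. C ! k < length Es) \<and>
         (\<exists>x\<in>X. x \<in> Es ! (C ! 0) \<and>
            (\<forall>i<length gs. \<phi> (gs ! i) x \<in> Es ! (C ! Suc i)))}"

definition solves_config_eqs ::
  "('g \<Rightarrow> 'x \<Rightarrow> 'x) \<Rightarrow> 'g list \<Rightarrow> 'x set list \<Rightarrow> 'x set \<Rightarrow> (nat list \<Rightarrow> real) \<Rightarrow> bool" where
  "solves_config_eqs \<phi> gs Es X f \<longleftrightarrow>
     (\<forall>j\<in>{1..length gs}. \<forall>i<length Es.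
        (\<Sum>C\<in>{C\<in>Con \<phi> gs Es X. C ! j = i}. f C) = (\<Sum>C\<in>{C\<in>Con \<phi> gs Es X. C ! 0 = i}. f C))"

definition has_normalized_solution ::
  "('g \<Rightarrow> 'x \<Rightarrow> 'x) \<Rightarrow> 'g list \<Rightarrow> 'x set list \<Rightarrow> 'x set \<Rightarrow> bool" where
  "has_normalized_solution \<phi> gs Es X \<longleftrightarrow>
     (\<exists>f. solves_config_eqs \<phi> gs Es X f \<and>
          (\<forall>C\<in>Con \<phi> gs Es X. f C \<ge> 0) \<and>
          (\<Sum>C\<in>Con \<phi> gs Es X. f C) = 1)"

end

theory Submission
  imports Defs "HOL-Analysis.Analysis"
begin

lemma indexed_partition_ex1_block:
  assumes "indexed_partition X Es" and "x \<in> X"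
  shows "\<exists>!i. i < length Es \<and> x \<in> Es ! i"
  using assms unfolding indexed_partition_def by blast

definition block_index :: "'x set list \<Rightarrow> 'x \<Rightarrow> nat" where
  "block_index Es x = (THE i. i < length Es \<and> x \<in> Es ! i)"

lemma block_index:
  assumes "indexed_partition X Es" and "x \<in> X"
  shows "block_index Es x < length Es" and "x \<in> Es ! block_index Es x"
  using theI'[OF indexed_partition_ex1_block[OF assms]] unfolding block_index_def by auto

lemma block_index_eq_iff:
  assumes "indexed_partition X Es" and "x \<in> X" and "i < length Es"
  shows "block_index Es x = i \<longleftrightarrow> x \<in> Es ! i"
  using block_index[OF assms(1,2)] indexed_partition_ex1_block[OF assms(1,2)] assms(3) by blast

lemma indexed_partition_of_partition_on:
  assumes "partition_on X P" and "finite P"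
  shows "\<exists>Es. indexed_partition X Es \<and> set Es = P"
proof -
  obtain Es where "distinct Es" and Es: "set Es = P"
    using finite_distinct_list[OF assms(2)] by blast
  then have "Es ! i \<noteq> Es ! j" if "i < length Es" "j < length Es" "i \<noteq> j" for i j
    using that by (simp add: nth_eq_iff_index_eq)
  moreover have "(\<Union>i<length Es. Es ! i) = \<Union>(set Es)"
    by (auto simp: set_conv_nth)
  ultimately have "indexed_partition X Es"
    using assms(1) Es unfolding indexed_partition_def partition_on_def disjoint_def
    by (auto simp: set_conv_nth) blast+
  with Es show ?thesis by blast
qed

lemma indexed_partition_refining:
  assumes "finite \<L>"
  shows "\<exists>Es. indexed_partition X Es \<and> (\<forall>i<length Es. \<forall>L\<in>\<L>. Es ! i \<subseteq> L \<or> Es ! i \<inter> L = {})"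
proof -
  define r where "r = {(x, y) \<in> X \<times> X. \<forall>L\<in>\<L>. x \<in> L \<longleftrightarrow> y \<in> L}"
  have "equiv X r"
    unfolding r_def by (rule equivI) (auto simp: refl_on_def sym_def trans_def)
  then have "partition_on X (X // r)"
    by (rule partition_on_quotient)
  moreover have "X // r \<subseteq> (\<lambda>S. {x\<in>X. \<forall>L\<in>\<L>. x \<in> L \<longleftrightarrow> L \<in> S}) ` Pow \<L>"
    unfolding r_def quotient_def by (auto intro!: image_eqI[where x = "{L\<in>\<L>. _ \<in> L}"])
  then have "finite (X // r)"
    by (rule finite_subset) (use assms in auto)
  ultimately obtain Es where Es: "indexed_partition X Es" "set Es = X // r"
    using indexed_partition_of_partition_on by blast
  have "B \<subseteq> L \<or> B \<inter> L = {}" if "B \<in> X // r" "L \<in> \<L>" for B L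
    using that unfolding r_def quotient_def by blast
  with Es show ?thesis by (metis nth_mem)
qed

definition config_cell ::
  "('g \<Rightarrow> 'x \<Rightarrow> 'x) \<Rightarrow> 'g list \<Rightarrow> 'x set list \<Rightarrow> 'x set \<Rightarrow> nat list \<Rightarrow> 'x set" where
  "config_cell \<phi> gs Es X C =
     {x\<in>X. x \<in> Es ! (C ! 0) \<and> (\<forall>i<length gs. \<phi> (gs ! i) x \<in> Es ! (C ! Suc i))}"

lemma Con_eq:
  "Con \<phi> gs Es X =
     {C. length C = Suc (length gs) \<and> (\<forall>k<length C. C ! k < length Es) \<and>
         config_cell \<phi> gs Es X C \<noteq> {}}"
  unfolding Con_def config_cell_def by blast

lemma finite_Con: "finite (Con \<phi> gs Es X)"
proof (rule finite_subset)
  show "Con \<phi> gs Es X \<subseteq> {C. set C \<subseteq> {..<length Es} \<and> length C = Suc (length gs)}"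
    unfolding Con_def by (auto simp: in_set_conv_nth)
qed (simp add: finite_lists_length_eq)

definition config_of :: "('g \<Rightarrow> 'x \<Rightarrow> 'x) \<Rightarrow> 'g list \<Rightarrow> 'x set list \<Rightarrow> 'x \<Rightarrow> nat list" where
  "config_of \<phi> gs Es x = block_index Es x # map (\<lambda>g. block_index Es (\<phi> g x)) gs"

context
  fixes \<phi> :: "'g \<Rightarrow> 'x \<Rightarrow> 'x" and gs :: "'g list" and Es :: "'x set list" and X :: "'x set"
  assumes partition: "indexed_partition X Es"
begin

lemma config_of_eq:
  assumes "C \<in> Con \<phi> gs Es X" and "x \<in> config_cell \<phi> gs Es X C"
  shows "C = config_of \<phi> gs Es x"
proof (rule nth_equalityI)
  have len: "length C = Suc (length gs)" and C_lt: "\<And>k. k < length C \<Longrightarrow> C ! k < length Es"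
    using assms(1) by (auto simp: Con_def)
  then show "length C = length (config_of \<phi> gs Es x)"
    by (simp add: config_of_def)
  have x: "x \<in> X" "x \<in> Es ! (C ! 0)"
    and x_moved: "\<And>i. i < length gs \<Longrightarrow> \<phi> (gs ! i) x \<in> Es ! (C ! Suc i)"
    using assms(2) by (auto simp: config_cell_def)
  fix k assume k: "k < length C"
  show "C ! k = config_of \<phi> gs Es x ! k"
  proof (cases k)
    case 0
    then show ?thesis
      using x block_index_eq_iff[OF partition x(1) C_lt[OF k]] by (simp add: config_of_def)
  next
    case (Suc i)
    with k len have i: "i < length gs" by simp
    have moved_X: "\<phi> (gs ! i) x \<in> X"
      using x_moved[OF i] C_lt[OF k] Suc partition by (auto simp: indexed_partition_def)
    have "block_index Es (\<phi> (gs ! i) x) = C ! k"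
      using x_moved[OF i] Suc block_index_eq_iff[OF partition moved_X C_lt[OF k]] by simp
    with Suc i show ?thesis by (simp add: config_of_def)
  qed
qed

lemma disjoint_family_on_config_cell: "disjoint_family_on (config_cell \<phi> gs Es X) (Con \<phi> gs Es X)"
  using config_of_eq unfolding disjoint_family_on_def by blast

context
  assumes closed: "\<And>g x. g \<in> set gs \<Longrightarrow> x \<in> X \<Longrightarrow> \<phi> g x \<in> X"
begin

lemma config_of_nth_Suc:
  assumes "x \<in> X" and "i < length gs" and "b < length Es"
  shows "config_of \<phi> gs Es x ! Suc i = b \<longleftrightarrow> \<phi> (gs ! i) x \<in> Es ! b"
  using assms closed block_index_eq_iff[OF partition] by (simp add: config_of_def)

lemma config_of_realized:
  assumes "x \<in> X"
  shows "config_of \<phi> gs Es x \<in> Con \<phi> gs Es X"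
    and "x \<in> config_cell \<phi> gs Es X (config_of \<phi> gs Es x)"
proof -
  show cell: "x \<in> config_cell \<phi> gs Es X (config_of \<phi> gs Es x)"
    using assms closed block_index[OF partition] by (simp add: config_cell_def config_of_def)
  have "config_of \<phi> gs Es x ! k < length Es" if "k < Suc (length gs)" for k
    using that assms closed block_index[OF partition] by (cases k) (auto simp: config_of_def)
  with cell show "config_of \<phi> gs Es x \<in> Con \<phi> gs Es X"
    by (auto simp: Con_eq config_of_def)
qed

lemma UN_config_cell:
  "(\<Union>C\<in>{C \<in> Con \<phi> gs Es X. Q C}. config_cell \<phi> gs Es X C) =
     {x\<in>X. Q (config_of \<phi> gs Es x)}"
proof (intro equalityI subsetI)
  fix x assume "x \<in> (\<Union>C\<in>{C \<in> Con \<phi> gs Es X. Q C}. config_cell \<phi> gs Es X C)"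
  then obtain C where "C \<in> Con \<phi> gs Es X" "Q C" "x \<in> config_cell \<phi> gs Es X C" by blast
  then show "x \<in> {x\<in>X. Q (config_of \<phi> gs Es x)}"
    using config_of_eq by (auto simp: config_cell_def)
qed (use config_of_realized in blast)

lemma sum_measure_config_cell:
  fixes \<mu> :: "'x set \<Rightarrow> ennreal"
  assumes "positive (Pow X) \<mu>" and "additive (Pow X) \<mu>"
  shows "(\<Sum>C\<in>{C\<in>Con \<phi> gs Es X. Q C}. \<mu> (config_cell \<phi> gs Es X C)) =
           \<mu> {x\<in>X. Q (config_of \<phi> gs Es x)}"
proof -
  have "(\<Sum>C\<in>{C\<in>Con \<phi> gs Es X. Q C}. \<mu> (config_cell \<phi> gs Es X C))
      = \<mu> (\<Union>C\<in>{C\<in>Con \<phi> gs Es X. Q C}. config_cell \<phi> gs Es X C)"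
  proof (rule ring_of_sets.additive_sum[OF ring_of_sets_Pow assms])
    show "finite {C\<in>Con \<phi> gs Es X. Q C}"
      using finite_Con[of \<phi> gs Es X] by simp
    show "config_cell \<phi> gs Es X ` {C\<in>Con \<phi> gs Es X. Q C} \<subseteq> Pow X"
      by (auto simp: config_cell_def)
    show "disjoint_family_on (config_cell \<phi> gs Es X) {C\<in>Con \<phi> gs Es X. Q C}"
      by (rule disjoint_family_on_mono[OF _ disjoint_family_on_config_cell]) auto
  qed
  then show ?thesis
    by (simp only: UN_config_cell)
qed

end

end

lemma (in group_action) vimage_eq_image_inv:
  assumes "h \<in> carrier G" and "A \<subseteq> E"
  shows "{x\<in>E. \<phi> h x \<in> A} = \<phi> (inv h) ` A"
proof -
  interpret group G
    using group_hom group_hom.axioms(1) by blast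
  show ?thesis
  proof (intro equalityI subsetI)
    fix x assume "x \<in> {x\<in>E. \<phi> h x \<in> A}"
    then show "x \<in> \<phi> (inv h) ` A"
      using orbit_sym_aux[OF assms(1)] by (metis (mono_tags, lifting) image_eqI mem_Collect_eq)
  next
    fix x assume "x \<in> \<phi> (inv h) ` A"
    then obtain a where a: "a \<in> A" "x = \<phi> (inv h) a" by blast
    with assms have "x \<in> E" and "\<phi> (inv (inv h)) x = a"
      using element_image[of "inv h" a] orbit_sym_aux[of "inv h" a] by auto
    with a assms(1) show "x \<in> {x\<in>E. \<phi> h x \<in> A}" by simp
  qed
qed

lemma amenable_action_imp_normalized_solution:
  fixes X :: "'x set"
  assumes "group_action G X \<phi>" and "amenable_action G X \<phi>" and "configuration_pair G X gs Es"
  shows "has_normalized_solution \<phi> gs Es X"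
proof -
  interpret group_action G X \<phi> by fact
  interpret group G
    using group_hom group_hom.axioms(1) by blast
  obtain \<mu> :: "'x set \<Rightarrow> ennreal" where pos: "positive (Pow X) \<mu>" and add: "additive (Pow X) \<mu>"
    and \<mu>_invariant: "\<And>E g. E \<subseteq> X \<Longrightarrow> g \<in> carrier G \<Longrightarrow> \<mu> (\<phi> g ` E) = \<mu> E" and \<mu>_X: "\<mu> X = 1"
    using assms(2) unfolding amenable_action_def positive_def additive_def by auto
  have gs: "set gs \<subseteq> carrier G" and part: "indexed_partition X Es"
    using assms(3) by (auto simp: configuration_pair_def)
  have closed: "\<And>g x. g \<in> set gs \<Longrightarrow> x \<in> X \<Longrightarrow> \<phi> g x \<in> X"
    using gs element_image by blast
  have \<mu>_finite: "\<mu> A < \<infinity>" if "A \<subseteq> X" for A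
  proof -
    have "\<mu> A \<le> \<mu> X"
      using ring_of_sets.additive_increasing[OF ring_of_sets_Pow pos add] that
      by (auto dest: increasingD)
    then show ?thesis
      using \<mu>_X by (simp add: order_le_less_trans)
  qed
  define f where "f C = enn2real (\<mu> (config_cell \<phi> gs Es X C))" for C
  have mass: "(\<Sum>C\<in>{C\<in>Con \<phi> gs Es X. Q C}. f C) = enn2real (\<mu> {x\<in>X. Q (config_of \<phi> gs Es x)})"
    for Q
  proof -
    have "(\<Sum>C\<in>{C\<in>Con \<phi> gs Es X. Q C}. f C)
        = enn2real (\<Sum>C\<in>{C\<in>Con \<phi> gs Es X. Q C}. \<mu> (config_cell \<phi> gs Es X C))"
      unfolding f_def using \<mu>_finite by (subst enn2real_sum) (auto simp: config_cell_def)
    then show ?thesis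
      using sum_measure_config_cell[where \<phi> = \<phi> and gs = gs, OF part closed pos add] by simp
  qed
  show ?thesis
    unfolding has_normalized_solution_def solves_config_eqs_def
  proof (intro exI[of _ f] conjI ballI allI impI)
    show "0 \<le> f C" for C
      by (simp add: f_def)
    show "(\<Sum>C\<in>Con \<phi> gs Es X. f C) = 1"
      using mass[of "\<lambda>_. True"] \<mu>_X by simp
    fix j i assume "j \<in> {1..length gs}" and i: "i < length Es"
    then obtain k where j: "j = Suc k" "k < length gs"
      by (cases j) auto
    have g: "gs ! k \<in> carrier G"
      using gs j(2) nth_mem by blast
    have Es_i: "Es ! i \<subseteq> X"
      using part i by (auto simp: indexed_partition_def)
    have "{x\<in>X. config_of \<phi> gs Es x ! j = i} = {x\<in>X. \<phi> (gs ! k) x \<in> Es ! i}"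
      using config_of_nth_Suc[where \<phi> = \<phi> and gs = gs, OF part closed _ j(2) i] j(1) by auto
    also have "\<dots> = \<phi> (inv\<^bsub>G\<^esub> (gs ! k)) ` (Es ! i)"
      by (rule vimage_eq_image_inv[OF g Es_i])
    finally have "{x\<in>X. config_of \<phi> gs Es x ! j = i} = \<phi> (inv\<^bsub>G\<^esub> (gs ! k)) ` (Es ! i)" .
    moreover have "{x\<in>X. config_of \<phi> gs Es x ! 0 = i} = Es ! i"
      using block_index_eq_iff[OF part _ i] Es_i by (auto simp: config_of_def)
    ultimately show "(\<Sum>C\<in>{C\<in>Con \<phi> gs Es X. C ! j = i}. f C) =
                     (\<Sum>C\<in>{C\<in>Con \<phi> gs Es X. C ! 0 = i}. f C)"
      using mass[of "\<lambda>C. C ! j = i"] mass[of "\<lambda>C. C ! 0 = i"] \<mu>_invariant[OF Es_i] g by simp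
  qed
qed

(* Bounded by 1 on all of 'x set, not only on subsets of X, so that these set functions form a
   compact subset of the product space. *)
definition probability_content :: "'x set \<Rightarrow> ('x set \<Rightarrow> real) \<Rightarrow> bool" where
  "probability_content X \<mu> \<longleftrightarrow>
     (\<forall>A. 0 \<le> \<mu> A \<and> \<mu> A \<le> 1) \<and> \<mu> X = 1 \<and>
     (\<forall>A B. A \<subseteq> X \<longrightarrow> B \<subseteq> X \<longrightarrow> A \<inter> B = {} \<longrightarrow> \<mu> (A \<union> B) = \<mu> A + \<mu> B)"

lemma compact_probability_contents: "compact {\<mu> :: 'x set \<Rightarrow> real. probability_content X \<mu>}"
proof -
  have cube: "compact (Pi\<^sub>E UNIV (\<lambda>_::'x set. {0..1::real}))"
    using compactin_PiE[of "\<lambda>_. euclidean" UNIV "\<lambda>_. {0..1::real}"]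
    by (simp add: euclidean_product_topology)
  have "closed {\<mu>::'x set \<Rightarrow> real. \<mu> X = 1 \<and>
      (\<forall>A B. A \<subseteq> X \<longrightarrow> B \<subseteq> X \<longrightarrow> A \<inter> B = {} \<longrightarrow> \<mu> (A \<union> B) = \<mu> A + \<mu> B)}"
  proof -
    have eval: "continuous_on UNIV (\<lambda>\<mu>::'x set \<Rightarrow> real. \<mu> A)" for A
      by (rule continuous_on_product_coordinates)
    have "closed {\<mu>::'x set \<Rightarrow> real. \<mu> X = 1}"
      using eval by (intro closed_Collect_eq continuous_on_const)
    moreover have "closed {\<mu>::'x set \<Rightarrow> real. \<mu> (A \<union> B) = \<mu> A + \<mu> B}" for A B
      using eval by (intro closed_Collect_eq continuous_on_add)
    ultimately show ?thesis
      by (intro closed_Collect_conj closed_Collect_all closed_Collect_imp open_Collect_const)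
  qed
  with cube have "compact (Pi\<^sub>E UNIV (\<lambda>_. {0..1}) \<inter> {\<mu>::'x set \<Rightarrow> real. \<mu> X = 1 \<and>
      (\<forall>A B. A \<subseteq> X \<longrightarrow> B \<subseteq> X \<longrightarrow> A \<inter> B = {} \<longrightarrow> \<mu> (A \<union> B) = \<mu> A + \<mu> B)})"
    by (rule compact_Int_closed)
  also have "\<dots> = {\<mu>. probability_content X \<mu>}"
    by (auto simp: probability_content_def PiE_UNIV_domain)
  finally show ?thesis .
qed

lemma probability_content_equations_compactness:
  assumes "\<And>Q'. finite Q' \<Longrightarrow> Q' \<subseteq> Q \<Longrightarrow> \<exists>\<mu>. probability_content X \<mu> \<and> (\<forall>(A, B)\<in>Q'. \<mu> A = \<mu> B)"
  shows "\<exists>\<mu>. probability_content X \<mu> \<and> (\<forall>(A, B)\<in>Q. \<mu> A = \<mu> B)"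
proof -
  have "{\<mu>. probability_content X \<mu>} \<inter> (\<Inter>q\<in>Q. {\<mu>. \<mu> (fst q) = \<mu> (snd q)}) \<noteq> {}"
  proof (rule compact_imp_fip_image[OF compact_probability_contents])
    show "closed {\<mu>::'x set \<Rightarrow> real. \<mu> (fst q) = \<mu> (snd q)}" for q
      by (intro closed_Collect_eq continuous_on_product_coordinates)
    show "{\<mu>. probability_content X \<mu>} \<inter> (\<Inter>q\<in>Q'. {\<mu>. \<mu> (fst q) = \<mu> (snd q)}) \<noteq> {}"
      if "finite Q'" and "Q' \<subseteq> Q" for Q'
    proof -
      from assms[OF that] obtain \<mu> where "probability_content X \<mu>" and "\<forall>(A, B)\<in>Q'. \<mu> A = \<mu> B"
        by blast
      then have "\<mu> \<in> {\<mu>. probability_content X \<mu>} \<inter> (\<Inter>q\<in>Q'. {\<mu>. \<mu> (fst q) = \<mu> (snd q)})"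
        by (auto simp: case_prod_unfold)
      then show ?thesis by blast
    qed
  qed
  then obtain \<mu> where "probability_content X \<mu>" and "\<forall>q\<in>Q. \<mu> (fst q) = \<mu> (snd q)"
    by blast
  then show ?thesis
    by (intro exI[of _ \<mu>]) (simp add: case_prod_unfold)
qed

lemma probability_content_point_masses:
  fixes X :: "'x set"
  assumes "finite S" and "\<And>s. s \<in> S \<Longrightarrow> 0 \<le> w s" and "sum w S = 1" and "p ` S \<subseteq> X"
  shows "probability_content X (\<lambda>B. sum w {s\<in>S. p s \<in> B})"
  unfolding probability_content_def
proof (intro conjI allI impI)
  fix A
  show "0 \<le> sum w {s\<in>S. p s \<in> A}"
    using assms(2) by (intro sum_nonneg) auto
  have "sum w {s\<in>S. p s \<in> A} \<le> sum w S"
    using assms(1,2) by (intro sum_mono2) auto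
  then show "sum w {s\<in>S. p s \<in> A} \<le> 1"
    using assms(3) by simp
next
  have "{s\<in>S. p s \<in> X} = S"
    using assms(4) by auto
  then show "sum w {s\<in>S. p s \<in> X} = 1"
    using assms(3) by simp
next
  fix A B :: "'x set" assume "A \<inter> B = {}"
  then have "{s\<in>S. p s \<in> A \<union> B} = {s\<in>S. p s \<in> A} \<union> {s\<in>S. p s \<in> B}"
    and "{s\<in>S. p s \<in> A} \<inter> {s\<in>S. p s \<in> B} = {}"
    by auto
  then show "sum w {s\<in>S. p s \<in> A \<union> B} = sum w {s\<in>S. p s \<in> A} + sum w {s\<in>S. p s \<in> B}"
    using assms(1) by (simp add: sum.union_disjoint)
qed

lemma solves_config_eqs_sum_blocks:
  assumes "solves_config_eqs \<phi> gs Es X f" and "j \<in> {1..length gs}" and "I \<subseteq> {..<length Es}"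
  shows "sum f {C\<in>Con \<phi> gs Es X. C ! j \<in> I} = sum f {C\<in>Con \<phi> gs Es X. C ! 0 \<in> I}"
proof -
  have "finite I"
    using assms(3) finite_subset by blast
  have split: "sum f {C\<in>Con \<phi> gs Es X. C ! k \<in> I} = (\<Sum>i\<in>I. sum f {C\<in>Con \<phi> gs Es X. C ! k = i})"
    for k
  proof -
    have "sum f {C\<in>Con \<phi> gs Es X. C ! k \<in> I}
        = (\<Sum>i\<in>I. sum f {C\<in>{C\<in>Con \<phi> gs Es X. C ! k \<in> I}. C ! k = i})"
      using \<open>finite I\<close> finite_subset[OF _ finite_Con[of \<phi> gs Es X]]
      by (intro sum.group[symmetric]) auto
    also have "\<dots> = (\<Sum>i\<in>I. sum f {C\<in>Con \<phi> gs Es X. C ! k = i})"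
      by (intro sum.cong refl arg_cong[where f = "sum f"]) auto
    finally show ?thesis .
  qed
  show ?thesis
    unfolding split
  proof (rule sum.cong[OF refl])
    fix i assume "i \<in> I"
    with assms show "sum f {C\<in>Con \<phi> gs Es X. C ! j = i} = sum f {C\<in>Con \<phi> gs Es X. C ! 0 = i}"
      unfolding solves_config_eqs_def by blast
  qed
qed

lemma point_mass_preimage_invariant:
  assumes "solves_config_eqs \<phi> gs Es X f" and "k < length gs"
    and refines: "\<And>i. i < length Es \<Longrightarrow> Es ! i \<subseteq> A \<or> Es ! i \<inter> A = {}"
    and p: "\<And>C. C \<in> Con \<phi> gs Es X \<Longrightarrow> p C \<in> config_cell \<phi> gs Es X C"
  shows "sum f {C\<in>Con \<phi> gs Es X. \<phi> (gs ! k) (p C) \<in> A} = sum f {C\<in>Con \<phi> gs Es X. p C \<in> A}"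
proof -
  define I where "I = {i. i < length Es \<and> Es ! i \<subseteq> A}"
  have block: "y \<in> A \<longleftrightarrow> i \<in> I" if "i < length Es" and "y \<in> Es ! i" for y i
    using refines[OF that(1)] that unfolding I_def by blast
  have C_lt: "C ! l < length Es" if "C \<in> Con \<phi> gs Es X" and "l \<le> length gs" for C l
    using that by (auto simp: Con_def)
  have moved: "\<phi> (gs ! k) (p C) \<in> A \<longleftrightarrow> C ! Suc k \<in> I" if "C \<in> Con \<phi> gs Es X" for C
  proof -
    have "\<phi> (gs ! k) (p C) \<in> Es ! (C ! Suc k)"
      using p[OF that] assms(2) by (simp add: config_cell_def)
    then show ?thesis
      using block C_lt[OF that, of "Suc k"] assms(2) by simp
  qed
  have base: "p C \<in> A \<longleftrightarrow> C ! 0 \<in> I" if "C \<in> Con \<phi> gs Es X" for C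
  proof -
    have "p C \<in> Es ! (C ! 0)"
      using p[OF that] by (simp add: config_cell_def)
    then show ?thesis
      using block C_lt[OF that, of 0] by simp
  qed
  have "{C\<in>Con \<phi> gs Es X. \<phi> (gs ! k) (p C) \<in> A} = {C\<in>Con \<phi> gs Es X. C ! Suc k \<in> I}"
    using moved by blast
  moreover have "{C\<in>Con \<phi> gs Es X. p C \<in> A} = {C\<in>Con \<phi> gs Es X. C ! 0 \<in> I}"
    using base by blast
  ultimately show ?thesis
    using solves_config_eqs_sum_blocks[OF assms(1), of "Suc k" I] assms(2) by (auto simp: I_def)
qed

lemma normalized_solutions_imp_invariant_content:
  fixes X :: "'x set"
  assumes "group_action G X \<phi>"
    and solvable: "\<forall>gs Es. configuration_pair G X gs Es \<longrightarrow> has_normalized_solution \<phi> gs Es X"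
    and "finite P" and P: "P \<subseteq> Pow X \<times> carrier G"
  shows "\<exists>\<mu>. probability_content X \<mu> \<and> (\<forall>(A, g)\<in>P. \<mu> (\<phi> g ` A) = \<mu> A)"
proof -
  interpret group_action G X \<phi> by fact
  interpret group G
    using group_hom group_hom.axioms(1) by blast
  obtain ps where ps: "set ps = P"
    using finite_list[OF \<open>finite P\<close>] by blast
  obtain Es where part: "indexed_partition X Es"
    and refines: "\<forall>i<length Es. \<forall>A\<in>fst ` P. Es ! i \<subseteq> A \<or> Es ! i \<inter> A = {}"
    using indexed_partition_refining[of "fst ` P" X] \<open>finite P\<close> by blast
  \<comment> \<open>The equations for inv g compare the mass of A with that of its preimage under inv g,
    which is the image of A under g.\<close>
  define gs where "gs = map (\<lambda>(A, g). inv\<^bsub>G\<^esub> g) ps"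
  have "configuration_pair G X gs Es"
    using P ps part by (auto simp: configuration_pair_def gs_def)
  with solvable obtain f where f: "solves_config_eqs \<phi> gs Es X f"
    "\<And>C. C \<in> Con \<phi> gs Es X \<Longrightarrow> 0 \<le> f C" "sum f (Con \<phi> gs Es X) = 1"
    unfolding has_normalized_solution_def by blast
  define p where "p C = (SOME x. x \<in> config_cell \<phi> gs Es X C)" for C
  have p: "p C \<in> config_cell \<phi> gs Es X C" if "C \<in> Con \<phi> gs Es X" for C
    using that unfolding p_def Con_eq by (simp add: some_in_eq)
  define \<mu> where "\<mu> B = sum f {C\<in>Con \<phi> gs Es X. p C \<in> B}" for B
  have "probability_content X \<mu>"
    unfolding \<mu>_def using f p
    by (intro probability_content_point_masses[OF finite_Con]) (auto simp: config_cell_def)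
  moreover have "\<mu> (\<phi> g ` A) = \<mu> A" if Ag: "(A, g) \<in> P" for A g
  proof -
    obtain k where k: "k < length ps" "ps ! k = (A, g)"
      using Ag ps by (auto simp: in_set_conv_nth)
    have A: "A \<subseteq> X" and g: "g \<in> carrier G"
      using Ag P by auto
    have gs_k: "gs ! k = inv\<^bsub>G\<^esub> g" "k < length gs"
      using k by (simp_all add: gs_def)
    have "x \<in> \<phi> g ` A \<longleftrightarrow> \<phi> (gs ! k) x \<in> A" if "x \<in> X" for x
      using vimage_eq_image_inv[of "inv\<^bsub>G\<^esub> g" A] g A that gs_k by auto
    then have "{C\<in>Con \<phi> gs Es X. p C \<in> \<phi> g ` A} = {C\<in>Con \<phi> gs Es X. \<phi> (gs ! k) (p C) \<in> A}"
      using p by (auto simp: config_cell_def)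
    moreover have "\<And>i. i < length Es \<Longrightarrow> Es ! i \<subseteq> A \<or> Es ! i \<inter> A = {}"
      using refines Ag by force
    ultimately show ?thesis
      unfolding \<mu>_def using point_mass_preimage_invariant[OF f(1) gs_k(2) _ p] by simp
  qed
  ultimately show ?thesis by blast
qed

lemma normalized_solutions_imp_amenable_action:
  fixes X :: "'x set"
  assumes "group_action G X \<phi>"
    and "\<forall>gs Es. configuration_pair G X gs Es \<longrightarrow> has_normalized_solution \<phi> gs Es X"
  shows "amenable_action G X \<phi>"
proof -
  define eq where "eq = (\<lambda>(A, g). (\<phi> g ` A, A))"
  have "\<exists>\<mu>. probability_content X \<mu> \<and> (\<forall>(A, B)\<in>eq ` (Pow X \<times> carrier G). \<mu> A = \<mu> B)"
  proof (rule probability_content_equations_compactness)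
    fix Q' assume "finite Q'" and "Q' \<subseteq> eq ` (Pow X \<times> carrier G)"
    then obtain P where P: "P \<subseteq> Pow X \<times> carrier G" "finite P" and Q': "Q' = eq ` P"
      using finite_subset_image by metis
    obtain \<mu> where "probability_content X \<mu>" and "\<forall>(A, g)\<in>P. \<mu> (\<phi> g ` A) = \<mu> A"
      using normalized_solutions_imp_invariant_content[OF assms P(2,1)] by blast
    then show "\<exists>\<mu>. probability_content X \<mu> \<and> (\<forall>(A, B)\<in>Q'. \<mu> A = \<mu> B)"
      unfolding Q' eq_def by auto
  qed
  then obtain \<mu> where \<mu>: "probability_content X \<mu>"
    and eqs: "\<forall>(A, B)\<in>eq ` (Pow X \<times> carrier G). \<mu> A = \<mu> B"
    by blast
  have invariant: "\<mu> (\<phi> g ` A) = \<mu> A" if "A \<subseteq> X" and "g \<in> carrier G" for A g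
  proof -
    have "(\<phi> g ` A, A) \<in> eq ` (Pow X \<times> carrier G)"
      unfolding eq_def using that by (intro image_eqI[where x = "(A, g)"]) auto
    then show ?thesis
      using eqs by blast
  qed
  have add: "\<mu> (A \<union> B) = \<mu> A + \<mu> B" if "A \<subseteq> X" and "B \<subseteq> X" and "A \<inter> B = {}" for A B
    using \<mu> that by (simp add: probability_content_def)
  have nonneg: "0 \<le> \<mu> A" for A
    using \<mu> by (simp add: probability_content_def)
  show ?thesis
    unfolding amenable_action_def
  proof (intro exI[of _ "\<lambda>A. ennreal (\<mu> A)"] conjI allI impI)
    show "ennreal (\<mu> {}) = 0"
      using add[of "{}" "{}"] by simp
    show "ennreal (\<mu> X) = 1"
      using \<mu> by (simp add: probability_content_def)
    fix A B assume "A \<subseteq> X" and "B \<subseteq> X" and "A \<inter> B = {}"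
    then show "ennreal (\<mu> (A \<union> B)) = ennreal (\<mu> A) + ennreal (\<mu> B)"
      using add nonneg by (simp add: ennreal_plus)
  next
    fix A g assume "A \<subseteq> X" and "g \<in> carrier G"
    then show "ennreal (\<mu> (\<phi> g ` A)) = ennreal (\<mu> A)"
      using invariant by simp
  qed
qed

theorem mainTheorem1:
  fixes G :: "('g, 'b) monoid_scheme" and X :: "'x set" and \<phi> :: "'g \<Rightarrow> 'x \<Rightarrow> 'x"
  assumes "group_action G X \<phi>"
    and "finitely_generated_group G"
  shows "amenable_action G X \<phi> \<longleftrightarrow>
         (\<forall>gs Es. configuration_pair G X gs Es \<longrightarrow> has_normalized_solution \<phi> gs Es X)"
  using amenable_action_imp_normalized_solution[OF assms(1)]
    normalized_solutions_imp_amenable_action[OF assms(1)] by blast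

end
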